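(* Let $f(X)=X-\frac{1}{X}$. There are infinitely many pairs of positive rational numbers $(x,y)$ such that $f(x)\,f(y)=f(4)^2$. *)

theory Defs
  imports Complex_Main
begin

definition fX :: "rat \<Rightarrow> rat" where
  "fX X = X - 1 / X"

end

theory Submission
  imports Defs
begin

text \<open>If \<open>r\<^sup>2 = t\<^sup>2 + 1\<close> then \<open>x = t + \<bar>r\<bar>\<close> is positive with \<open>fX x = 2t\<close>. So with \<open>c = 225/64\<close>,
  every rational \<open>t \<noteq> 0\<close> for which \<open>t\<^sup>2 + 1\<close> and \<open>t\<^sup>2 + c\<^sup>2\<close> are both squares gives a solution
  \<open>(x, y)\<close> with \<open>fX x = 2t\<close>, \<open>fX y = 2c/t\<close>, hence \<open>fX x * fX y = 4c = (fX 4)\<^sup>2\<close>.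
  Putting \<open>X = 64\<^sup>2 t\<^sup>2\<close>, this asks for \<open>X\<close>, \<open>X + 64\<^sup>2\<close> and \<open>X + 225\<^sup>2\<close> to be squares, which
  holds whenever \<open>X\<close> is the abscissa of a doubled point on the elliptic curve
  \<open>y\<^sup>2 = x (x + 64\<^sup>2) (x + 225\<^sup>2)\<close>. Doubling a point whose abscissa has 2-adic valuation
  \<open>-2e\<close>, \<open>e \<ge> 1\<close>, gives one of valuation \<open>-2(e + 1)\<close>, so iterated doubling of a suitable
  point yields infinitely many distinct \<open>X\<close>.\<close>

definition on_curve :: "rat \<Rightarrow> rat \<Rightarrow> rat \<Rightarrow> rat \<Rightarrow> bool" where
  "on_curve a b x y \<longleftrightarrow> y^2 = x * (x + a) * (x + b)"

text \<open>Up to the sign of the second coordinate this is doubling in the group law; the three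
  factors are chosen so that \<open>t\<^sup>2\<close>, \<open>t\<^sup>2 + a = r\<^sup>2\<close> and \<open>t\<^sup>2 + b = s\<^sup>2\<close> are all squares.\<close>

definition curve_double :: "rat \<Rightarrow> rat \<Rightarrow> rat \<times> rat \<Rightarrow> rat \<times> rat" where
  "curve_double a b = (\<lambda>(x, y).
     let t = (x^2 - a * b) / (2 * y); r = (x^2 + 2 * a * x + a * b) / (2 * y);
         s = (x^2 + 2 * b * x + a * b) / (2 * y)
     in (t^2, t * r * s))"

lemma fst_curve_double: "fst (curve_double a b (x, y)) = ((x^2 - a * b) / (2 * y))^2"
  unfolding curve_double_def Let_def by simp

lemma on_curve_swap: "on_curve a b x y \<longleftrightarrow> on_curve b a x y"
  unfolding on_curve_def by (simp add: ac_simps)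

lemma doubling_square_identity:
  fixes a b x :: "'a::comm_ring_1"
  shows "(x^2 + 2*b*x + a*b)^2 = (x^2 - a*b)^2 + 4 * b * (x * (x + a) * (x + b))"
  by (simp add: power2_eq_square algebra_simps)

lemma shifted_square:
  assumes "on_curve a b x y" "y \<noteq> 0"
  shows "((x^2 + 2*b*x + a*b) / (2*y))^2 = ((x^2 - a*b) / (2*y))^2 + b"
proof -
  define A B where "A = x^2 + 2*b*x + a*b" and "B = x^2 - a*b"
  have "A^2 = B^2 + b * (2*y)^2"
    using assms(1) doubling_square_identity[of x b a] unfolding on_curve_def A_def B_def
    by (simp add: algebra_simps)
  then have "(A / (2*y))^2 = (B / (2*y))^2 + b * (2*y)^2 / (2*y)^2"
    by (simp add: power_divide add_divide_distrib)
  with assms(2) show ?thesis unfolding A_def B_def by simp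
qed

lemma on_curve_double:
  assumes "on_curve a b x y" "y \<noteq> 0"
  shows "on_curve a b (fst (curve_double a b (x, y))) (snd (curve_double a b (x, y)))"
proof -
  define t r s where "t = (x^2 - a * b) / (2 * y)" and "r = (x^2 + 2 * a * x + a * b) / (2 * y)"
    and "s = (x^2 + 2 * b * x + a * b) / (2 * y)"
  have "r^2 = t^2 + a"
    using shifted_square[OF assms(1)[THEN on_curve_swap[THEN iffD1]] assms(2)]
    unfolding r_def t_def by (simp add: mult.commute)
  moreover have "s^2 = t^2 + b"
    using shifted_square[OF assms] unfolding s_def t_def .
  moreover have "curve_double a b (x, y) = (t^2, t * r * s)"
    unfolding curve_double_def t_def r_def s_def Let_def by simp
  ultimately show ?thesis unfolding on_curve_def by (simp add: power_mult_distrib)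
qed

lemma fX_root:
  fixes t r :: rat
  assumes "r^2 = t^2 + 1"
  shows "0 < t + \<bar>r\<bar>" "fX (t + \<bar>r\<bar>) = 2 * t"
proof -
  have r: "\<bar>r\<bar>^2 = t^2 + 1" using assms by simp
  then have "\<bar>t\<bar>^2 < \<bar>r\<bar>^2" by simp
  then have "\<bar>t\<bar> < \<bar>r\<bar>" by (rule power2_less_imp_less) simp
  then show pos: "0 < t + \<bar>r\<bar>" by linarith
  have "(t + \<bar>r\<bar>) * (\<bar>r\<bar> - t) = 1" using r by (simp add: algebra_simps power2_eq_square)
  then have "1 / (t + \<bar>r\<bar>) = \<bar>r\<bar> - t" using pos by (simp add: field_simps)
  then show "fX (t + \<bar>r\<bar>) = 2 * t" unfolding fX_def by simp
qed

lemma fX_pair: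
  fixes t r s c :: rat
  assumes "t \<noteq> 0" "r^2 = t^2 + 1" "s^2 = t^2 + c^2"
  shows "0 < t + \<bar>r\<bar>" "0 < c/t + \<bar>s/t\<bar>" "fX (t + \<bar>r\<bar>) * fX (c/t + \<bar>s/t\<bar>) = 4 * c"
proof -
  have "(s/t)^2 = (c/t)^2 + 1"
    using assms(1,3) by (simp add: power_divide add_divide_distrib)
  then have "0 < c/t + \<bar>s/t\<bar>" "fX (c/t + \<bar>s/t\<bar>) = 2 * (c/t)" by (rule fX_root)+
  with fX_root[OF assms(2)] assms(1) show "0 < t + \<bar>r\<bar>" "0 < c/t + \<bar>s/t\<bar>"
      "fX (t + \<bar>r\<bar>) * fX (c/t + \<bar>s/t\<bar>) = 4 * c"
    by simp_all
qed

lemma fX_pair_of_curve_double: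
  assumes on: "on_curve (\<alpha>^2) (\<beta>^2) x y" and "y \<noteq> 0" "\<alpha> \<noteq> 0"
    and nz: "fst (curve_double (\<alpha>^2) (\<beta>^2) (x, y)) \<noteq> 0"
  obtains u v where "0 < u" "0 < v" "fX u * fX v = 4 * (\<beta> / \<alpha>)"
    "\<alpha>^2 * (fX u)^2 = 4 * fst (curve_double (\<alpha>^2) (\<beta>^2) (x, y))"
proof -
  define t r s where "t = (x^2 - \<alpha>^2 * \<beta>^2) / (2 * y)"
    and "r = (x^2 + 2 * \<alpha>^2 * x + \<alpha>^2 * \<beta>^2) / (2 * y)"
    and "s = (x^2 + 2 * \<beta>^2 * x + \<alpha>^2 * \<beta>^2) / (2 * y)"
  have X: "fst (curve_double (\<alpha>^2) (\<beta>^2) (x, y)) = \<alpha>^2 * (t / \<alpha>)^2"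
    using \<open>\<alpha> \<noteq> 0\<close> by (simp add: fst_curve_double flip: t_def) (simp add: power_divide)
  with nz have "t / \<alpha> \<noteq> 0" by simp
  have "r^2 = t^2 + \<alpha>^2"
    using shifted_square[OF on[THEN on_curve_swap[THEN iffD1]] \<open>y \<noteq> 0\<close>]
    unfolding r_def t_def by (simp add: mult.commute)
  then have r: "(r / \<alpha>)^2 = (t / \<alpha>)^2 + 1"
    using \<open>\<alpha> \<noteq> 0\<close> by (simp add: power_divide add_divide_distrib)
  have "s^2 = t^2 + \<beta>^2"
    using shifted_square[OF on \<open>y \<noteq> 0\<close>] unfolding s_def t_def .
  then have s: "(s / \<alpha>)^2 = (t / \<alpha>)^2 + (\<beta> / \<alpha>)^2"
    using \<open>\<alpha> \<noteq> 0\<close> by (simp add: power_divide add_divide_distrib)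
  note fX_pair[OF \<open>t / \<alpha> \<noteq> 0\<close> r s]
  moreover have "\<alpha>^2 * (fX (t / \<alpha> + \<bar>r / \<alpha>\<bar>))^2 = 4 * fst (curve_double (\<alpha>^2) (\<beta>^2) (x, y))"
    using fX_root(2)[OF r] X by (simp add: power_mult_distrib power_divide)
  ultimately show ?thesis by (rule that)
qed

definition dyadic_level :: "nat \<Rightarrow> rat \<Rightarrow> bool" where
  "dyadic_level e x \<longleftrightarrow> (\<exists>u w :: int. odd u \<and> odd w \<and> x = of_int u / (of_int w * 4^e))"

lemma dyadic_level_nonzero: "dyadic_level e x \<Longrightarrow> x \<noteq> 0"
  unfolding dyadic_level_def by force

lemma odd_fractions_pow4_neq:
  fixes u w u' w' :: int
  assumes "odd u" "odd w" "odd u'" "odd w'" "k < k'"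
  shows "(of_int u / (of_int w * 4^k) :: rat) \<noteq> of_int u' / (of_int w' * 4^k')"
proof
  assume eq: "(of_int u / (of_int w * 4^k) :: rat) = of_int u' / (of_int w' * 4^k')"
  have "w \<noteq> 0" "w' \<noteq> 0" using assms(2,4) by auto
  with eq have "(of_int (u * w' * 4^k') :: rat) = of_int (u' * w * 4^k)"
    by (simp add: frac_eq_eq algebra_simps)
  then have "u * w' * 4^k' = u' * w * 4^k" by (simp only: of_int_eq_iff)
  moreover have "(4::int)^k' = 4^k * 4^(k' - k)" using assms(5) by (simp flip: power_add)
  ultimately have "u * w' * 4^(k' - k) = u' * w" by (simp add: algebra_simps)
  moreover have "even (u * w' * 4^(k' - k))" using assms(5) by simp
  ultimately show False using assms(2,3) by simp
qed

lemma dyadic_level_unique: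
  assumes "dyadic_level e x" "dyadic_level e' x"
  shows "e = e'"
proof -
  from assms obtain u w u' w' :: int where "odd u" "odd w" "odd u'" "odd w'"
    "x = of_int u / (of_int w * 4^e)" "x = of_int u' / (of_int w' * 4^e')"
    unfolding dyadic_level_def by blast
  then show ?thesis
    using odd_fractions_pow4_neq[of u w u' w' e e'] odd_fractions_pow4_neq[of u' w' u w e' e]
    by (cases e e' rule: linorder_cases) auto
qed

lemma dyadic_level_curve_double:
  fixes a b :: int
  assumes on: "on_curve (of_int a) (of_int b) x y" and "dyadic_level e x" "1 \<le> e"
  shows "y \<noteq> 0" "dyadic_level (Suc e) (fst (curve_double (of_int a) (of_int b) (x, y)))"
proof -
  from \<open>dyadic_level e x\<close> obtain u w :: int
    where "odd u" "odd w" and x_eq: "x = of_int u / (of_int w * 4^e)"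
    unfolding dyadic_level_def by blast
  define d :: int where "d = w * 4^e"
  have "even d" using \<open>1 \<le> e\<close> unfolding d_def by (cases e) auto
  have "d \<noteq> 0" "u \<noteq> 0" using \<open>odd w\<close> \<open>odd u\<close> unfolding d_def by auto
  have x: "x = of_int u / of_int d" unfolding x_eq d_def by simp
  define M where "M = (u + a * d) * (u + b * d)"
  define N where "N = u^2 - a * b * d^2"
  have "odd M" "odd N" using \<open>odd u\<close> \<open>even d\<close> unfolding M_def N_def by auto
  have y2: "y^2 = of_int (u * M) / of_int d ^ 3"
    using on \<open>d \<noteq> 0\<close> unfolding on_curve_def x M_def
    by (simp add: field_simps power3_eq_cube)
  with \<open>u \<noteq> 0\<close> \<open>odd M\<close> \<open>d \<noteq> 0\<close> show "y \<noteq> 0" by auto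
  have "x^2 - of_int a * of_int b = of_int N / of_int d ^ 2"
    using \<open>d \<noteq> 0\<close> unfolding x N_def by (simp add: field_simps power2_eq_square)
  then have "fst (curve_double (of_int a) (of_int b) (x, y)) = of_int N ^ 2 / (4 * of_int d ^ 4 * y^2)"
    unfolding fst_curve_double by (simp add: power_divide power_mult_distrib)
  also have "\<dots> = of_int N ^ 2 / (4 * of_int d * of_int (u * M))"
    unfolding y2 using \<open>d \<noteq> 0\<close> \<open>u \<noteq> 0\<close> \<open>odd M\<close>
    by (simp add: field_simps power2_eq_square power3_eq_cube power4_eq_xxxx)
  also have "\<dots> = of_int (N^2) / (of_int (w * u * M) * 4 ^ Suc e)"
    unfolding d_def by (simp add: ac_simps)
  finally show "dyadic_level (Suc e) (fst (curve_double (of_int a) (of_int b) (x, y)))"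
    unfolding dyadic_level_def using \<open>odd N\<close> \<open>odd u\<close> \<open>odd w\<close> \<open>odd M\<close>
    by (intro exI[of _ "N^2"] exI[of _ "w * u * M"]) simp
qed

definition base_point :: "rat \<times> rat" where
  "base_point = (-12558375 / 256, 7619227875 / 4096)"

definition curve_point :: "nat \<Rightarrow> rat \<times> rat" where
  "curve_point n = (curve_double 4096 50625 ^^ n) base_point"

lemma curve_point_invariant:
  "on_curve 4096 50625 (fst (curve_point n)) (snd (curve_point n))
   \<and> dyadic_level (4 + n) (fst (curve_point n))"
proof (induction n)
  case 0
  have "dyadic_level 4 (-12558375 / 256)"
    unfolding dyadic_level_def by (intro exI[of _ "-12558375"] exI[of _ 1]) simp
  moreover have "on_curve 4096 50625 (-12558375 / 256) (7619227875 / 4096)"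
    unfolding on_curve_def by (simp add: power2_eq_square)
  ultimately show ?case by (simp add: curve_point_def base_point_def)
next
  case (Suc n)
  obtain x y where p: "curve_point n = (x, y)" by fastforce
  with Suc.IH have on: "on_curve (of_int 4096) (of_int 50625) x y"
    and "dyadic_level (4 + n) x" by simp_all
  then have "y \<noteq> 0" "dyadic_level (4 + Suc n) (fst (curve_double 4096 50625 (x, y)))"
    using dyadic_level_curve_double[OF on \<open>dyadic_level (4 + n) x\<close>] by simp_all
  moreover have "curve_point (Suc n) = curve_double 4096 50625 (x, y)"
    using p by (simp add: curve_point_def)
  ultimately show ?case using on_curve_double[of 4096 50625 x y] on by simp
qed

lemma solution_of_curve_point:
  obtains u v where "0 < u" "0 < v" "fX u * fX v = (fX 4)^2"
    "fst (curve_point (Suc n)) = 64^2 * (fX u)^2 / 4"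
proof -
  obtain x y where p: "curve_point n = (x, y)" by fastforce
  have on: "on_curve (64^2) (225^2) x y" and "dyadic_level (4 + n) x"
    using curve_point_invariant[of n] p by simp_all
  then have "y \<noteq> 0" using dyadic_level_curve_double(1)[of 4096 50625 x y] by simp
  have X: "fst (curve_point (Suc n)) = fst (curve_double (64^2) (225^2) (x, y))"
    using p by (simp add: curve_point_def)
  moreover have "fst (curve_point (Suc n)) \<noteq> 0"
    using curve_point_invariant[of "Suc n"] dyadic_level_nonzero by blast
  ultimately obtain u v where "0 < u" "0 < v" "fX u * fX v = 4 * (225 / 64)"
    "64^2 * (fX u)^2 = 4 * fst (curve_point (Suc n))"
    using fX_pair_of_curve_double[OF on \<open>y \<noteq> 0\<close>] by (metis zero_neq_numeral)
  moreover have "(fX 4)^2 = 4 * (225 / 64)" by (simp add: fX_def power2_eq_square)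
  ultimately show ?thesis using that by simp
qed

theorem mainTheorem9:
  shows "infinite {(x :: rat, y :: rat). 0 < x \<and> 0 < y \<and> fX x * fX y = (fX 4)^2}"
proof -
  let ?S = "{(x :: rat, y :: rat). 0 < x \<and> 0 < y \<and> fX x * fX y = (fX 4)^2}"
  define X where "X n = fst (curve_point (Suc n))" for n
  have "inj X"
  proof (rule injI)
    fix m n assume "X m = X n"
    then have "4 + Suc m = 4 + Suc n"
      using curve_point_invariant[of "Suc m"] curve_point_invariant[of "Suc n"]
      by (metis X_def dyadic_level_unique)
    then show "m = n" by simp
  qed
  have "X n \<in> (\<lambda>(u, v). 64^2 * (fX u)^2 / 4) ` ?S" for n
    by (rule solution_of_curve_point[of n]) (force simp: X_def)
  then have "range X \<subseteq> (\<lambda>(u, v). 64^2 * (fX u)^2 / 4) ` ?S" by blast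
  moreover have "infinite (range X)"
    using \<open>inj X\<close> finite_imageD infinite_UNIV_nat by blast
  ultimately show ?thesis using finite_subset by blast
qed

end
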